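(* Suppose $\dim_{\mathbb{C}}N=n-m=4$, where $N=\mathrm{span}_{\mathbb{C}}\{I_{m+1},\dots,I_n\}$, and suppose the structure constants satisfy $\Upsilon^{m+1}_{m+1,m+2}\Upsilon^{m+2}_{m+2,m+3}=\Upsilon^{m+1}_{m+1,m+2}\Upsilon^{m+2}_{m+2,m+4}=\Upsilon^{m+1}_{m+1,m+3}\Upsilon^{m+2}_{m+3,m+4}=\Upsilon^{m+3}_{m+3,m+4}\Upsilon^{m+1}_{m+1,m+3}=\Upsilon^{m+1}_{m+2,m+3}\Upsilon^{m+1}_{m+3,m+4}=\Upsilon^{m+1}_{m+2,m+3}\Upsilon^{m+2}_{m+3,m+4}=\Upsilon^{m+1}_{m+2,m+3}\Upsilon^{m+3}_{m+3,m+4}=\Upsilon^{m+1}_{m+1,m+2}\Upsilon^{m+1}_{m+2,m+3}\Upsilon^{m+2}_{m+3,m+4}=\Upsilon^{m+1}_{m+1,m+2}\Upsilon^{m+1}_{m+2,m+3}\Upsilon^{m+3}_{m+3,m+4}=\Upsilon^{m+2}_{m+2,m+3}\Upsilon^{m+1}_{m+3,m+4}=\Upsilon^{m+2}_{m+2,m+3}\Upsilon^{m+3}_{m+3,m+4}=\Upsilon^{m+2}_{m+2,m+3}\Upsilon^{m+1}_{m+1,m+2}\Upsilon^{m+1}_{m+3,m+4}=\Upsilon^{m+2}_{m+2,m+3}\Upsilon^{m+1}_{m+1,m+2}\Upsilon^{m+2}_{m+3,m+4}=\Upsilon^{m+2}_{m+2,m+3}\Upsilon^{m+1}_{m+1,m+2}\Upsilon^{m+3}_{m+3,m+4}=0.$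 Then for every circle $C$ as described in the context, $\lambda:=\int_C\zeta^{-1}\,d\zeta=2\pi i$ (that is, $2\pi i$ times the unit of $\mathbb{A}_n^m$).
   Context: Fix natural numbers $m\le n$. $\mathbb{A}_n^m$ is a commutative associative algebra with unit over $\mathbb{C}$ with a basis $\{I_k\}_{k=1}^n$ satisfying: (1) for $r,s\in\{1,\dots,m\}$, $I_rI_s=0$ if $r\ne s$ and $I_rI_r=I_r$; (2) for $r,s\in\{m+1,\dots,n\}$, $I_rI_s=\sum_{k=\max\{r,s\}+1}^{n}\Upsilon^{s}_{r,k}I_k$ with constants $\Upsilon^s_{r,k}\in\mathbb{C}$ (so $\Upsilon^s_{r,k}$ is the coefficient of $I_k$ in $I_rI_s$); (3) for each $s\in\{m+1,\dots,n\}$ there is a unique $u_s\in\{1,\dots,m\}$ such that for $r\in\{1,\dots,m\}$, $I_rI_s=I_s$ if $r=u_s$ and $0$ otherwise. Unit $1=\sum_{u=1}^mI_u$; $\mathbb{A}_n^m=S\oplus_sN$ with $S=\mathrm{span}\{I_1,\dots,I_m\}$, $N=\mathrm{span}\{I_{m+1},\dots,I_n\}$. $f_u(\sum_k\lambda_kI_k)=\lambda_u$. Let $e_1=1$, $e_2=\sum_ka_kI_k$, $e_3=\sum_kb_kI_k$ ($a_k,b_k\in\mathbb{C}$) be linearly independent over $\mathbb{R}$; $\zeta=xe_1+ye_2+ze_3$ ($x,y,z\in\mathbb{R}$), $E_3$ their real span. Standing assumption: $f_u(E_3)=\mathbb{C}$ for all $u=1,\dots,m$. $\zeta$ is non-invertible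 exactly when $(x,y,z)$ lies on one of the lines $L_u=\{x+y\,\mathrm{Re}\,a_u+z\,\mathrm{Re}\,b_u=0,\ y\,\mathrm{Im}\,a_u+z\,\mathrm{Im}\,b_u=0\}$. The circle: $C\subset E_3$ is $C=\{xe_1+ye_2+ze_3:(x,y,z)\in C'\}$ for a Euclidean circle $C'\subset\mathbb{R}^3$ of radius $R>0$ centered at the origin, such that for every $u$ the image $f_u(C)$ is a positively oriented closed Jordan curve in $\mathbb{C}$ bounding a domain containing $0$. Integral: for a Jordan rectifiable curve $\gamma$ and continuous $\Psi=\sum_k(U_k+iV_k)I_k$ on $\gamma_\zeta$, $\int_{\gamma_\zeta}\Psi d\zeta:=\sum_kI_k\int_\gamma(U_k+iV_k)dx+\sum_ke_2I_k\int_\gamma(U_k+iV_k)dy+\sum_ke_3I_k\int_\gamma(U_k+iV_k)dz$. *)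

theory Defs
  imports "HOL-Complex_Analysis.Complex_Analysis"
begin

text \<open>Elements of the algebra A_n^m are coefficient functions x :: nat => complex,
  x k being the coefficient of the basis vector I_k (k in {1..n}); coefficients outside
  {1..n} are zero.  Ups s r k is the structure constant Upsilon^s_{r,k}, i.e. the
  coefficient of I_k in I_r I_s; u s is the index u_s of rule (3).\<close>

definition alg_elems :: "nat \<Rightarrow> (nat \<Rightarrow> complex) set" where
  "alg_elems n = {x. \<forall>k. k \<notin> {1..n} \<longrightarrow> x k = 0}"

definition basis_el :: "nat \<Rightarrow> nat \<Rightarrow> complex" where
  "basis_el i = (\<lambda>k. if k = i then 1 else 0)"

definition tbl :: "nat \<Rightarrow> nat \<Rightarrow> (nat \<Rightarrow> nat \<Rightarrow> nat \<Rightarrow> complex) \<Rightarrow> (nat \<Rightarrow> nat)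
    \<Rightarrow> nat \<Rightarrow> nat \<Rightarrow> nat \<Rightarrow> complex" where
  "tbl m n Ups u r s k =
     (if r \<le> m \<and> s \<le> m then (if r = s \<and> k = r then 1 else 0)
      else if r \<le> m then (if r = u s \<and> k = s then 1 else 0)
      else if s \<le> m then (if s = u r \<and> k = r then 1 else 0)
      else (if max r s < k \<and> k \<le> n then Ups s r k else 0))"

definition amul :: "nat \<Rightarrow> nat \<Rightarrow> (nat \<Rightarrow> nat \<Rightarrow> nat \<Rightarrow> complex) \<Rightarrow> (nat \<Rightarrow> nat)
    \<Rightarrow> (nat \<Rightarrow> complex) \<Rightarrow> (nat \<Rightarrow> complex) \<Rightarrow> (nat \<Rightarrow> complex)" where
  "amul m n Ups u x y = (\<lambda>k. if k \<in> {1..n} then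
      (\<Sum>r\<in>{1..n}. \<Sum>s\<in>{1..n}. x r * y s * tbl m n Ups u r s k) else 0)"

definition aone :: "nat \<Rightarrow> nat \<Rightarrow> complex" where
  "aone m = (\<lambda>k. if 1 \<le> k \<and> k \<le> m then 1 else 0)"

definition ainv :: "nat \<Rightarrow> nat \<Rightarrow> (nat \<Rightarrow> nat \<Rightarrow> nat \<Rightarrow> complex) \<Rightarrow> (nat \<Rightarrow> nat)
    \<Rightarrow> (nat \<Rightarrow> complex) \<Rightarrow> (nat \<Rightarrow> complex)" where
  "ainv m n Ups u x = (THE y. y \<in> alg_elems n \<and> amul m n Ups u x y = aone m)"

definition is_algebra_Anm :: "nat \<Rightarrow> nat \<Rightarrow> (nat \<Rightarrow> nat \<Rightarrow> nat \<Rightarrow> complex) \<Rightarrow> (nat \<Rightarrow> nat) \<Rightarrow> bool" where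
  "is_algebra_Anm m n Ups u \<longleftrightarrow>
     1 \<le> m \<and> m \<le> n \<and>
     (\<forall>s\<in>{m+1..n}. u s \<in> {1..m}) \<and>
     (\<forall>r\<in>{1..n}. \<forall>s\<in>{1..n}. \<forall>k. tbl m n Ups u r s k = tbl m n Ups u s r k) \<and>
     (\<forall>i\<in>{1..n}. \<forall>j\<in>{1..n}. \<forall>l\<in>{1..n}.
        amul m n Ups u (amul m n Ups u (basis_el i) (basis_el j)) (basis_el l)
      = amul m n Ups u (basis_el i) (amul m n Ups u (basis_el j) (basis_el l)))"

definition coeffs_el :: "nat \<Rightarrow> (nat \<Rightarrow> complex) \<Rightarrow> nat \<Rightarrow> complex" where
  "coeffs_el n a = (\<lambda>k. if k \<in> {1..n} then a k else 0)"

text \<open>zeta = x e_1 + y e_2 + z e_3 for P = (x,y,z).\<close>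
definition zeta :: "nat \<Rightarrow> (nat \<Rightarrow> complex) \<Rightarrow> (nat \<Rightarrow> complex) \<Rightarrow> real^3 \<Rightarrow> nat \<Rightarrow> complex" where
  "zeta m e2 e3 P = (\<lambda>k. of_real (P$1) * aone m k + of_real (P$2) * e2 k + of_real (P$3) * e3 k)"

definition circ :: "real \<Rightarrow> real^3 \<Rightarrow> real^3 \<Rightarrow> real \<Rightarrow> real^3" where
  "circ R p q t = R *\<^sub>R (cos (2*pi*t) *\<^sub>R p + sin (2*pi*t) *\<^sub>R q)"

definition coord_int :: "(real \<Rightarrow> real^3) \<Rightarrow> (real^3 \<Rightarrow> complex) \<Rightarrow> 3 \<Rightarrow> complex" where
  "coord_int \<gamma> g j = integral {0..1} (\<lambda>t. g (\<gamma> t) * of_real (vector_derivative \<gamma> (at t) $ j))"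

definition alg_int :: "nat \<Rightarrow> nat \<Rightarrow> (nat \<Rightarrow> nat \<Rightarrow> nat \<Rightarrow> complex) \<Rightarrow> (nat \<Rightarrow> nat)
   \<Rightarrow> (nat \<Rightarrow> complex) \<Rightarrow> (nat \<Rightarrow> complex) \<Rightarrow> (real \<Rightarrow> real^3) \<Rightarrow> (real^3 \<Rightarrow> nat \<Rightarrow> complex)
   \<Rightarrow> nat \<Rightarrow> complex" where
  "alg_int m n Ups u e2 e3 \<gamma> \<Psi> =
     (let V = (\<lambda>j k. if k \<in> {1..n} then coord_int \<gamma> (\<lambda>P. \<Psi> P k) j else 0)
      in (\<lambda>k. V 1 k + amul m n Ups u e2 (V 2) k + amul m n Ups u e3 (V 3) k))"

end

(*
  On the circle the semisimple coordinates f_u(zeta) never vanish: zeta(-P) = -zeta(P), so a zero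
  at parameter t would be repeated at t +- 1/2, contradicting that f_u(C) is a Jordan curve.
  Hence zeta = D (1 + W) with D in S invertible and W in N nilpotent (W^(n-m+1) = 0), and
  zeta^-1 zeta' = D^-1 D' + sum_j (-1)^j W^j W'.  Each W^j W' = (W^(j+1))' / (j+1) integrates to
  zero over the closed curve, while the u-th coordinate of D^-1 D' is f_u(zeta)'/f_u(zeta), whose
  integral is 2 pi i times the winding number of f_u(C) around 0, i.e. 2 pi i.
*)

theory Submission
  imports Defs "HOL-Library.Function_Algebras"
begin

lemma sum_fun_apply: "(\<Sum>i\<in>I. f i) x = (\<Sum>i\<in>I. f i x)"
  by (induction I rule: infinite_finite_induct) auto

lemma sum_swap_3:
  "(\<Sum>a\<in>A. \<Sum>b\<in>B. \<Sum>c\<in>C. f a b c) = (\<Sum>b\<in>B. \<Sum>c\<in>C. \<Sum>a\<in>A. f a b c)"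
proof -
  have "(\<Sum>a\<in>A. \<Sum>b\<in>B. \<Sum>c\<in>C. f a b c) = (\<Sum>b\<in>B. \<Sum>a\<in>A. \<Sum>c\<in>C. f a b c)"
    by (rule sum.swap)
  also have "\<dots> = (\<Sum>b\<in>B. \<Sum>c\<in>C. \<Sum>a\<in>A. f a b c)"
    by (intro sum.cong refl sum.swap)
  finally show ?thesis .
qed

lemma sum_swap_4:
  "(\<Sum>a\<in>A. \<Sum>b\<in>B. \<Sum>c\<in>C. \<Sum>d\<in>D. f a b c d) = (\<Sum>c\<in>C. \<Sum>d\<in>D. \<Sum>b\<in>B. \<Sum>a\<in>A. f a b c d)"
proof -
  have "(\<Sum>a\<in>A. \<Sum>b\<in>B. \<Sum>c\<in>C. \<Sum>d\<in>D. f a b c d) = (\<Sum>b\<in>B. \<Sum>c\<in>C. \<Sum>a\<in>A. \<Sum>d\<in>D. f a b c d)"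
    by (rule sum_swap_3)
  also have "\<dots> = (\<Sum>b\<in>B. \<Sum>c\<in>C. \<Sum>d\<in>D. \<Sum>a\<in>A. f a b c d)"
    by (intro sum.cong refl sum.swap)
  also have "\<dots> = (\<Sum>c\<in>C. \<Sum>d\<in>D. \<Sum>b\<in>B. \<Sum>a\<in>A. f a b c d)"
    by (rule sum_swap_3)
  finally show ?thesis .
qed

definition cscale :: "complex \<Rightarrow> (nat \<Rightarrow> complex) \<Rightarrow> nat \<Rightarrow> complex" where
  "cscale c x = (\<lambda>k. c * x k)"

lemma cscale_zero [simp]: "cscale c 0 = 0"
  by (simp add: cscale_def fun_eq_iff)

text \<open>Elements of the algebra are plain coefficient functions without a normed-space structure,
  so derivatives and continuity of curves in the algebra are taken coefficientwise.\<close>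

definition has_coeff_derivative :: "(real \<Rightarrow> nat \<Rightarrow> complex) \<Rightarrow> (nat \<Rightarrow> complex) \<Rightarrow> real \<Rightarrow> bool" where
  "has_coeff_derivative X X' t \<longleftrightarrow> (\<forall>k. ((\<lambda>s. X s k) has_vector_derivative X' k) (at t))"

definition coeff_continuous :: "(real \<Rightarrow> nat \<Rightarrow> complex) \<Rightarrow> real \<Rightarrow> bool" where
  "coeff_continuous X t \<longleftrightarrow> (\<forall>k. isCont (\<lambda>s. X s k) t)"

lemma has_coeff_derivative_imp_coeff_continuous:
  "has_coeff_derivative X X' t \<Longrightarrow> coeff_continuous X t"
  unfolding has_coeff_derivative_def coeff_continuous_def
  using has_vector_derivative_continuous by blast

lemma coeff_continuous_const: "coeff_continuous (\<lambda>s. c) t"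
  by (simp add: coeff_continuous_def)

lemma coeff_continuous_cscale: "coeff_continuous X t \<Longrightarrow> coeff_continuous (\<lambda>s. cscale c (X s)) t"
  by (simp add: coeff_continuous_def cscale_def continuous_intros)

lemma coeff_continuous_sum:
  "(\<And>j. j \<in> J \<Longrightarrow> coeff_continuous (X j) t) \<Longrightarrow> coeff_continuous (\<lambda>s. \<Sum>j\<in>J. X j s) t"
  by (simp add: coeff_continuous_def sum_fun_apply continuous_intros)

lemma has_integral_winding_number_log_derivative:
  fixes g g' :: "real \<Rightarrow> complex"
  assumes g: "\<And>t. (g has_vector_derivative g' t) (at t)"
    and g': "continuous_on {0..1} g'" and nz: "\<And>t. t \<in> {0..1} \<Longrightarrow> g t \<noteq> 0"
  shows "((\<lambda>t. g' t / g t) has_integral 2 * of_real pi * \<i> * winding_number g 0) {0..1}"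
proof -
  have "valid_path g"
    unfolding valid_path_def
  proof (rule C1_differentiable_imp_piecewise)
    show "g C1_differentiable_on {0..1}"
      unfolding C1_differentiable_on_eq
      using g' differentiableI_vector[OF g] vector_derivative_at[OF g] by auto
  qed
  moreover have "0 \<notin> path_image g"
    using nz by (auto simp: path_image_def)
  ultimately have "((\<lambda>w. 1 / (w - 0)) has_contour_integral 2 * pi * \<i> * winding_number g 0) g"
    by (rule has_contour_integral_winding_number)
  then have "((\<lambda>t. 1 / g t * vector_derivative g (at t within {0..1})) has_integral
      2 * of_real pi * \<i> * winding_number g 0) {0..1}"
    by (simp add: has_contour_integral_def)
  moreover have "1 / g t * vector_derivative g (at t within {0..1}) = g' t / g t" if "t \<in> {0..1}" for t
  proof -
    have "vector_derivative g (at t within {0..1}) = g' t"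
      by (rule vector_derivative_within_closed_interval) (use that has_vector_derivative_at_within[OF g] in auto)
    then show ?thesis by simp
  qed
  ultimately show ?thesis
    by (rule has_integral_eq[rotated]) simp
qed

lemma has_coeff_derivative_zeta:
  assumes "(\<gamma> has_vector_derivative \<gamma>') (at t)"
  shows "has_coeff_derivative (\<lambda>s. zeta m A B (\<gamma> s)) (zeta m A B \<gamma>') t"
proof -
  have "((\<lambda>s. \<gamma> s $ j) has_real_derivative \<gamma>' $ j) (at t)" for j
    unfolding has_real_derivative_iff_has_vector_derivative
    by (rule bounded_linear.has_vector_derivative[OF bounded_linear_vec_nth assms])
  then show ?thesis
    unfolding has_coeff_derivative_def zeta_def
    by (intro allI has_vector_derivative_add has_vector_derivative_mult_left has_vector_derivative_of_real)
qed

lemma zeta_eq_cscale: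
  "zeta m A B P = cscale (of_real (P $ 1)) (aone m) + cscale (of_real (P $ 2)) A + cscale (of_real (P $ 3)) B"
  by (simp add: zeta_def cscale_def fun_eq_iff)

locale Anm_algebra =
  fixes m n :: nat and Ups :: "nat \<Rightarrow> nat \<Rightarrow> nat \<Rightarrow> complex" and u :: "nat \<Rightarrow> nat"
  assumes is_algebra: "is_algebra_Anm m n Ups u"
begin

abbreviation "T \<equiv> tbl m n Ups u"
abbreviation "mul \<equiv> amul m n Ups u"
abbreviation "one \<equiv> aone m"
abbreviation "elems \<equiv> alg_elems n"

lemma m_le_n: "m \<le> n"
  and u_range: "s \<in> {m+1..n} \<Longrightarrow> u s \<in> {1..m}"
  using is_algebra unfolding is_algebra_Anm_def by auto

lemma tbl_commute: "r \<in> {1..n} \<Longrightarrow> s \<in> {1..n} \<Longrightarrow> T r s k = T s r k"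
  using is_algebra unfolding is_algebra_Anm_def by blast

lemma elems_iff: "x \<in> elems \<longleftrightarrow> (\<forall>k. k \<notin> {1..n} \<longrightarrow> x k = 0)"
  by (simp add: alg_elems_def)

lemma mul_apply:
  "mul x y k = (if k \<in> {1..n} then (\<Sum>r\<in>{1..n}. \<Sum>s\<in>{1..n}. x r * y s * T r s k) else 0)"
  unfolding amul_def by (rule refl)

lemma mul_outside: "k \<notin> {1..n} \<Longrightarrow> mul x y k = 0"
  by (auto simp: mul_apply)

lemma mul_in_elems: "mul x y \<in> elems"
  unfolding elems_iff using mul_outside by blast

lemma mul_commute: "mul x y = mul y x"
proof
  fix k
  have "(\<Sum>r\<in>{1..n}. \<Sum>s\<in>{1..n}. x r * y s * T r s k)
      = (\<Sum>r\<in>{1..n}. \<Sum>s\<in>{1..n}. y s * x r * T s r k)"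
    by (intro sum.cong refl) (simp add: tbl_commute mult.commute)
  also have "\<dots> = (\<Sum>s\<in>{1..n}. \<Sum>r\<in>{1..n}. y s * x r * T s r k)"
    by (rule sum.swap)
  finally show "mul x y k = mul y x k" by (simp add: mul_apply)
qed

lemma sum_basis_el: "finite S \<Longrightarrow> i \<in> S \<Longrightarrow> (\<Sum>r\<in>S. basis_el i r * g r) = g i"
  by (simp add: basis_el_def if_distrib[of "\<lambda>z. z * _"] sum.delta' cong: if_cong)

lemma mul_basis_left:
  "i \<in> {1..n} \<Longrightarrow> k \<in> {1..n} \<Longrightarrow> mul (basis_el i) y k = (\<Sum>s\<in>{1..n}. y s * T i s k)"
proof -
  assume i: "i \<in> {1..n}" and k: "k \<in> {1..n}"
  have "mul (basis_el i) y k = (\<Sum>r\<in>{1..n}. basis_el i r * (\<Sum>s\<in>{1..n}. y s * T r s k))"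
    using k by (simp add: mul_apply sum_distrib_left mult.assoc)
  also have "\<dots> = (\<Sum>s\<in>{1..n}. y s * T i s k)"
    using i by (simp add: sum_basis_el)
  finally show ?thesis .
qed

lemma mul_basis_right:
  "j \<in> {1..n} \<Longrightarrow> k \<in> {1..n} \<Longrightarrow> mul x (basis_el j) k = (\<Sum>r\<in>{1..n}. x r * T r j k)"
  using mul_basis_left[of j k x] by (simp add: mul_commute tbl_commute)

lemma mul_basis_basis:
  "i \<in> {1..n} \<Longrightarrow> j \<in> {1..n} \<Longrightarrow> k \<in> {1..n} \<Longrightarrow> mul (basis_el i) (basis_el j) k = T i j k"
  by (simp add: mul_basis_left mult.commute sum_basis_el)

lemma tbl_assoc:
  assumes "i \<in> {1..n}" "j \<in> {1..n}" "l \<in> {1..n}" "k \<in> {1..n}"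
  shows "(\<Sum>t\<in>{1..n}. T i j t * T t l k) = (\<Sum>t\<in>{1..n}. T j l t * T i t k)"
proof -
  have "(\<Sum>t\<in>{1..n}. T i j t * T t l k) = mul (mul (basis_el i) (basis_el j)) (basis_el l) k"
  proof -
    have "(\<Sum>t\<in>{1..n}. T i j t * T t l k) = (\<Sum>t\<in>{1..n}. mul (basis_el i) (basis_el j) t * T t l k)"
      using assms by (intro sum.cong refl) (simp add: mul_basis_basis)
    also have "\<dots> = mul (mul (basis_el i) (basis_el j)) (basis_el l) k"
      using assms by (simp add: mul_basis_right)
    finally show ?thesis .
  qed
  also have "\<dots> = mul (basis_el i) (mul (basis_el j) (basis_el l)) k"
    using is_algebra assms unfolding is_algebra_Anm_def by metis
  also have "\<dots> = (\<Sum>t\<in>{1..n}. T j l t * T i t k)"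
  proof -
    have "mul (basis_el i) (mul (basis_el j) (basis_el l)) k = (\<Sum>t\<in>{1..n}. mul (basis_el j) (basis_el l) t * T i t k)"
      using assms by (simp add: mul_basis_left)
    also have "\<dots> = (\<Sum>t\<in>{1..n}. T j l t * T i t k)"
      using assms by (intro sum.cong refl) (simp add: mul_basis_basis)
    finally show ?thesis .
  qed
  finally show ?thesis .
qed

lemma mul_assoc: "mul (mul x y) z = mul x (mul y z)"
proof
  fix k
  let ?I = "{1..n}"
  show "mul (mul x y) z k = mul x (mul y z) k"
  proof (cases "k \<in> ?I")
    case False
    then show ?thesis by (simp add: mul_outside)
  next
    case k: True
    have "mul (mul x y) z k = (\<Sum>t\<in>?I. \<Sum>l\<in>?I. (\<Sum>r\<in>?I. \<Sum>s\<in>?I. x r * y s * T r s t) * z l * T t l k)"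
      using k by (simp only: mul_apply[of "mul x y"] if_True) (intro sum.cong refl, simp add: mul_apply)
    also have "\<dots> = (\<Sum>t\<in>?I. \<Sum>l\<in>?I. \<Sum>r\<in>?I. \<Sum>s\<in>?I. x r * y s * z l * (T r s t * T t l k))"
      by (simp only: sum_distrib_right) (simp add: mult_ac)
    also have "\<dots> = (\<Sum>r\<in>?I. \<Sum>s\<in>?I. \<Sum>l\<in>?I. \<Sum>t\<in>?I. x r * y s * z l * (T r s t * T t l k))"
      by (rule sum_swap_4)
    also have "\<dots> = (\<Sum>r\<in>?I. \<Sum>s\<in>?I. \<Sum>l\<in>?I. x r * y s * z l * (\<Sum>t\<in>?I. T r s t * T t l k))"
      by (simp only: sum_distrib_left)
    also have "\<dots> = (\<Sum>r\<in>?I. \<Sum>s\<in>?I. \<Sum>l\<in>?I. x r * y s * z l * (\<Sum>t\<in>?I. T s l t * T r t k))"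
      using k by (intro sum.cong refl arg_cong2[where f = "(*)"] tbl_assoc) auto
    also have "\<dots> = (\<Sum>r\<in>?I. \<Sum>s\<in>?I. \<Sum>l\<in>?I. \<Sum>t\<in>?I. x r * y s * z l * (T s l t * T r t k))"
      by (simp only: sum_distrib_left)
    also have "\<dots> = (\<Sum>r\<in>?I. \<Sum>t\<in>?I. \<Sum>s\<in>?I. \<Sum>l\<in>?I. x r * y s * z l * (T s l t * T r t k))"
      by (rule sum.cong[OF refl], rule sum_swap_3[symmetric])
    also have "\<dots> = (\<Sum>r\<in>?I. \<Sum>t\<in>?I. x r * (\<Sum>s\<in>?I. \<Sum>l\<in>?I. y s * z l * T s l t) * T r t k)"
      by (simp only: sum_distrib_left sum_distrib_right) (simp add: mult_ac)
    also have "\<dots> = mul x (mul y z) k"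
      using k by (simp only: mul_apply[of x] if_True) (intro sum.cong refl, simp add: mul_apply)
    finally show ?thesis .
  qed
qed

lemma mul_left_commute: "mul x (mul y z) = mul y (mul x z)"
  by (metis mul_assoc mul_commute)

lemmas mul_ac = mul_assoc mul_commute mul_left_commute

lemma mul_add_left: "mul (x + y) z = mul x z + mul y z"
  by (rule ext) (simp add: mul_apply sum.distrib algebra_simps)

lemma mul_add_right: "mul z (x + y) = mul z x + mul z y"
  by (simp add: mul_commute[of z] mul_add_left)

lemma mul_minus_left: "mul (- x) z = - mul x z"
  by (rule ext) (simp add: mul_apply sum_negf)

lemma mul_minus_right: "mul z (- x) = - mul z x"
  by (simp add: mul_commute[of z] mul_minus_left)

lemma mul_diff_left: "mul (x - y) z = mul x z - mul y z"
  using mul_add_left[of x "- y" z] by (simp add: mul_minus_left)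

lemma mul_diff_right: "mul z (x - y) = mul z x - mul z y"
  by (simp add: mul_commute[of z] mul_diff_left)

lemma mul_zero_left: "mul 0 z = 0"
  by (rule ext) (simp add: mul_apply)

lemma mul_zero_right: "mul z 0 = 0"
  by (simp add: mul_commute[of z] mul_zero_left)

lemma mul_cscale_left: "mul (cscale c x) z = cscale c (mul x z)"
  by (rule ext) (simp add: mul_apply cscale_def sum_distrib_left mult_ac)

lemma mul_cscale_right: "mul z (cscale c x) = cscale c (mul z x)"
  by (simp add: mul_commute[of z] mul_cscale_left)

lemma mul_sum_left: "mul (\<Sum>j\<in>J. f j) z = (\<Sum>j\<in>J. mul (f j) z)"
proof (induction J rule: infinite_finite_induct)
  case (infinite J)
  then show ?case by (simp only: sum.infinite[OF infinite.hyps] mul_zero_left)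
next
  case empty
  show ?case by (simp only: sum.empty mul_zero_left)
next
  case (insert j J)
  have "mul (\<Sum>i\<in>insert j J. f i) z = mul (f j + (\<Sum>i\<in>J. f i)) z"
    by (rule arg_cong[of _ _ "\<lambda>v. mul v z"], rule sum.insert[OF insert.hyps])
  also have "\<dots> = mul (f j) z + (\<Sum>i\<in>J. mul (f i) z)"
    by (simp only: mul_add_left insert.IH)
  also have "\<dots> = (\<Sum>i\<in>insert j J. mul (f i) z)"
    by (rule sum.insert[OF insert.hyps, symmetric])
  finally show ?case .
qed

lemma one_in_elems: "one \<in> elems"
  using m_le_n by (auto simp: elems_iff aone_def)

lemma sum_tbl_unit_column:
  assumes s: "s \<in> {1..n}" and k: "k \<in> {1..n}"
  shows "(\<Sum>r\<in>{1..n}. one r * T r s k) = (if k = s then 1 else 0)"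
proof -
  let ?v = "if s \<le> m then s else u s"
  have v: "?v \<in> {1..m}" using s u_range[of s] by auto
  have "(\<Sum>r\<in>{1..n}. one r * T r s k) = (\<Sum>r\<in>{1..m}. T r s k)"
    using m_le_n by (intro sum.mono_neutral_cong_right) (auto simp: aone_def)
  also have "\<dots> = (\<Sum>r\<in>{1..m}. if r = ?v then (if k = s then 1 else 0) else 0)"
  proof (intro sum.cong refl)
    fix r assume "r \<in> {1..m}"
    then show "T r s k = (if r = ?v then (if k = s then 1 else 0) else 0)"
      by (cases "s \<le> m") (simp_all add: tbl_def)
  qed
  also have "\<dots> = (if k = s then 1 else 0)"
    using v by (simp add: sum.delta)
  finally show ?thesis .
qed

lemma mul_one_left: "x \<in> elems \<Longrightarrow> mul one x = x"
proof
  fix k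
  assume x: "x \<in> elems"
  show "mul one x k = x k"
  proof (cases "k \<in> {1..n}")
    case k: True
    have "mul one x k = (\<Sum>s\<in>{1..n}. x s * (\<Sum>r\<in>{1..n}. one r * T r s k))"
      using k by (simp add: mul_apply sum_distrib_left mult_ac) (rule sum.swap)
    also have "\<dots> = (\<Sum>s\<in>{1..n}. x s * (if k = s then 1 else 0))"
      using k by (intro sum.cong refl, subst sum_tbl_unit_column) auto
    also have "\<dots> = x k"
      using k by (simp add: if_distrib[of "\<lambda>z. _ * z"] sum.delta cong: if_cong)
    finally show ?thesis .
  qed (use x in \<open>simp add: mul_outside elems_iff\<close>)
qed

lemma mul_one_right: "x \<in> elems \<Longrightarrow> mul x one = x"
  by (simp add: mul_commute[of x] mul_one_left)

lemma ainv_eqI: "y \<in> elems \<Longrightarrow> mul x y = one \<Longrightarrow> ainv m n Ups u x = y"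
  unfolding ainv_def
proof (rule the_equality)
  assume y: "y \<in> elems" "mul x y = one"
  then show "y \<in> elems \<and> mul x y = one" ..
  fix y' assume y': "y' \<in> elems \<and> mul x y' = one"
  then have "y' = mul (mul x y) y'" using y by (simp add: mul_one_left)
  also have "\<dots> = mul y (mul x y')" by (simp add: mul_ac)
  finally show "y' = y" using y y' by (simp add: mul_one_right)
qed

primrec mpow :: "(nat \<Rightarrow> complex) \<Rightarrow> nat \<Rightarrow> nat \<Rightarrow> complex" where
  "mpow x 0 = one"
| "mpow x (Suc j) = mul x (mpow x j)"

lemma mpow_in_elems: "mpow x j \<in> elems"
  by (cases j) (simp_all add: one_in_elems mul_in_elems)

definition in_S :: "(nat \<Rightarrow> complex) \<Rightarrow> bool" where
  "in_S x \<longleftrightarrow> (\<forall>k. x k \<noteq> 0 \<longrightarrow> k \<in> {1..m})"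

text \<open>\<open>in_N i x\<close> says x lies in span{I_i, ..., I_n}.  As I_r I_s only involves I_k with
  k > max r s, multiplying by an element of N = span{I_(m+1), ..., I_n} raises i.\<close>

definition in_N :: "nat \<Rightarrow> (nat \<Rightarrow> complex) \<Rightarrow> bool" where
  "in_N i x \<longleftrightarrow> (\<forall>k. x k \<noteq> 0 \<longrightarrow> k \<in> {i..n})"

definition S_part :: "(nat \<Rightarrow> complex) \<Rightarrow> nat \<Rightarrow> complex" where
  "S_part x = (\<lambda>k. if k \<in> {1..m} then x k else 0)"

definition N_part :: "(nat \<Rightarrow> complex) \<Rightarrow> nat \<Rightarrow> complex" where
  "N_part x = (\<lambda>k. if k \<in> {m<..n} then x k else 0)"

definition S_inv :: "(nat \<Rightarrow> complex) \<Rightarrow> nat \<Rightarrow> complex" where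
  "S_inv x = (\<lambda>k. if k \<in> {1..m} then inverse (x k) else 0)"

lemma in_S_elems: "in_S x \<Longrightarrow> x \<in> elems"
  using m_le_n by (auto simp: in_S_def elems_iff)

lemma in_N_elems: "in_N i x \<Longrightarrow> 1 \<le> i \<Longrightarrow> x \<in> elems"
  by (force simp: in_N_def elems_iff)

lemma in_S_S_part: "in_S (S_part x)" and in_S_S_inv: "in_S (S_inv x)"
  and in_N_N_part: "in_N (Suc m) (N_part x)"
  by (auto simp: in_S_def in_N_def S_part_def S_inv_def N_part_def)

lemma S_part_plus_N_part: "x \<in> elems \<Longrightarrow> S_part x + N_part x = x"
  using m_le_n by (auto simp: fun_eq_iff elems_iff S_part_def N_part_def)

lemma mul_eq_0I:
  assumes "\<And>r s. r \<in> {1..n} \<Longrightarrow> s \<in> {1..n} \<Longrightarrow> x r \<noteq> 0 \<Longrightarrow> y s \<noteq> 0 \<Longrightarrow> T r s k = 0"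
  shows "mul x y k = 0"
proof -
  have "\<forall>r\<in>{1..n}. \<forall>s\<in>{1..n}. x r * y s * T r s k = 0" using assms by fastforce
  then show ?thesis by (auto simp: mul_apply intro!: sum.neutral)
qed

lemma mul_S_S:
  assumes x: "in_S x" and y: "in_S y"
  shows "mul x y = (\<lambda>k. x k * y k)"
proof
  fix k
  show "mul x y k = x k * y k"
  proof (cases "k \<in> {1..n}")
    case False
    then have "x k = 0" using x m_le_n unfolding in_S_def by force
    then show ?thesis using False by (simp add: mul_outside)
  next
    case k: True
    have "x r * y s * T r s k = (if r = k then (if s = k then x k * y k else 0) else 0)"
      if "r \<in> {1..n}" "s \<in> {1..n}" for r s
    proof (cases "x r = 0 \<or> y s = 0")
      case False
      then have "r \<le> m" "s \<le> m" using x y unfolding in_S_def by auto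
      then show ?thesis by (auto simp: tbl_def)
    qed auto
    then have "mul x y k = (\<Sum>r\<in>{1..n}. \<Sum>s\<in>{1..n}. if r = k then (if s = k then x k * y k else 0) else 0)"
      using k unfolding mul_apply by (simp only: if_True) (intro sum.cong refl)
    also have "\<dots> = (\<Sum>r\<in>{1..n}. if r = k then (\<Sum>s\<in>{1..n}. if s = k then x k * y k else 0) else 0)"
      by (intro sum.cong refl) simp
    also have "\<dots> = x k * y k"
      using k by (simp only: sum.delta finite_atLeastAtMost if_True)
    finally show ?thesis .
  qed
qed

lemma mul_S_N:
  assumes x: "in_S x" and y: "in_N i y" and i: "m < i"
  shows "in_N i (mul x y)"
  unfolding in_N_def
proof (intro allI impI)
  fix k assume nz: "mul x y k \<noteq> 0"
  then have k: "k \<in> {1..n}" using mul_outside by blast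
  have "mul x y k = 0" if "k < i"
  proof (rule mul_eq_0I)
    fix r s assume "x r \<noteq> 0" "y s \<noteq> 0"
    then have "r \<le> m" "i \<le> s" using x y unfolding in_S_def in_N_def by auto
    then show "T r s k = 0" using i \<open>k < i\<close> by (auto simp: tbl_def)
  qed
  with nz k show "k \<in> {i..n}" by force
qed

lemma mul_N_N:
  assumes x: "in_N (Suc m) x" and y: "in_N i y" and i: "m < i"
  shows "in_N (Suc i) (mul x y)"
  unfolding in_N_def
proof (intro allI impI)
  fix k assume nz: "mul x y k \<noteq> 0"
  then have k: "k \<in> {1..n}" using mul_outside by blast
  have "mul x y k = 0" if "k \<le> i"
  proof (rule mul_eq_0I)
    fix r s assume "x r \<noteq> 0" "y s \<noteq> 0"
    then have "Suc m \<le> r" "i \<le> s" using x y unfolding in_N_def by auto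
    then show "T r s k = 0" using i \<open>k \<le> i\<close> by (auto simp: tbl_def)
  qed
  with nz k show "k \<in> {Suc i..n}" by force
qed

lemma mpow_in_N:
  assumes x: "in_N (Suc m) x"
  shows "1 \<le> j \<Longrightarrow> in_N (m + j) (mpow x j)"
proof (induction j)
  case (Suc j)
  show ?case
  proof (cases "j = 0")
    case True
    then show ?thesis using x in_N_elems[OF x] by (simp add: mul_one_right)
  next
    case False
    then show ?thesis using mul_N_N[OF x Suc.IH] by simp
  qed
qed simp

lemma mpow_nilpotent:
  assumes "in_N (Suc m) x"
  shows "mpow x (Suc (n - m)) = 0"
proof -
  have "in_N (Suc n) (mpow x (Suc (n - m)))"
    using mpow_in_N[OF assms, of "Suc (n - m)"] m_le_n by simp
  then show ?thesis by (force simp: in_N_def)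
qed

definition neumann :: "(nat \<Rightarrow> complex) \<Rightarrow> nat \<Rightarrow> nat \<Rightarrow> complex" where
  "neumann w N = (\<Sum>j<N. cscale ((-1) ^ j) (mpow w j))"

lemma mul_one_plus_neumann:
  "mul (one + w) (neumann w N) = one - cscale ((-1) ^ N) (mpow w N)"
proof (induction N)
  case 0
  have "mul (one + w) (neumann w 0) = 0"
    unfolding neumann_def lessThan_0 sum.empty by (rule mul_zero_right)
  also have "\<dots> = one - cscale ((-1) ^ 0) (mpow w 0)"
    by (simp add: cscale_def fun_eq_iff)
  finally show ?case .
next
  case (Suc N)
  have step: "mul (one + w) (mpow w N) = mpow w N + mpow w (Suc N)"
    by (simp add: mul_add_left mul_one_left mpow_in_elems)
  have "mul (one + w) (neumann w (Suc N))
      = mul (one + w) (neumann w N) + cscale ((-1) ^ N) (mul (one + w) (mpow w N))"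
    by (simp only: neumann_def sum.lessThan_Suc mul_add_right mul_cscale_right)
  also have "\<dots> = one - cscale ((-1) ^ N) (mpow w N) + cscale ((-1) ^ N) (mpow w N + mpow w (Suc N))"
    by (simp only: Suc.IH step)
  also have "\<dots> = one - cscale ((-1) ^ Suc N) (mpow w (Suc N))"
    by (simp add: cscale_def fun_eq_iff algebra_simps)
  finally show ?case .
qed

definition nil_factor :: "(nat \<Rightarrow> complex) \<Rightarrow> nat \<Rightarrow> complex" where
  "nil_factor x = mul (S_inv x) (N_part x)"

text \<open>The derivative of \<open>nil_factor\<close> along a curve with velocity x', using
  (D^-1)' = - D^-2 D' for the semisimple part D.\<close>

definition nil_factor_deriv :: "(nat \<Rightarrow> complex) \<Rightarrow> (nat \<Rightarrow> complex) \<Rightarrow> nat \<Rightarrow> complex" where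
  "nil_factor_deriv x x' =
     mul (- mul (mul (S_inv x) (S_inv x)) (S_part x')) (N_part x) + mul (S_inv x) (N_part x')"

lemma in_N_nil_factor: "in_N (Suc m) (nil_factor x)"
  unfolding nil_factor_def by (rule mul_S_N[OF in_S_S_inv in_N_N_part]) simp

lemma mul_S_part_S_inv:
  assumes "\<forall>k\<in>{1..m}. x k \<noteq> 0"
  shows "mul (S_part x) (S_inv x) = one"
  unfolding mul_S_S[OF in_S_S_part in_S_S_inv]
  using assms by (auto simp: fun_eq_iff S_part_def S_inv_def aone_def)

lemma mul_one_plus_neumann_nilpotent:
  assumes "in_N (Suc m) w"
  shows "mul (one + w) (neumann w (Suc (n - m))) = one"
  using mpow_nilpotent[OF assms] by (simp add: mul_one_plus_neumann)

lemma mul_S_part_one_plus_nil_factor: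
  assumes x: "x \<in> elems" and nz: "\<forall>k\<in>{1..m}. x k \<noteq> 0"
  shows "mul (S_part x) (one + nil_factor x) = x"
proof -
  have "mul (S_part x) (nil_factor x) = mul (mul (S_part x) (S_inv x)) (N_part x)"
    unfolding nil_factor_def by (simp only: mul_assoc)
  also have "\<dots> = N_part x"
    using nz in_N_elems[OF in_N_N_part] by (simp add: mul_S_part_S_inv mul_one_left)
  finally have "mul (S_part x) (one + nil_factor x) = S_part x + N_part x"
    using in_S_elems[OF in_S_S_part] by (simp only: mul_add_right mul_one_right)
  then show ?thesis using x by (simp only: S_part_plus_N_part)
qed

lemma ainv_eq_neumann:
  assumes x: "x \<in> elems" and nz: "\<forall>k\<in>{1..m}. x k \<noteq> 0"
  shows "ainv m n Ups u x = mul (S_inv x) (neumann (nil_factor x) (Suc (n - m)))"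
proof (rule ainv_eqI[OF mul_in_elems])
  let ?W = "nil_factor x" and ?P = "neumann (nil_factor x) (Suc (n - m))"
  have "mul x (mul (S_inv x) ?P) = mul (mul (S_part x) (one + ?W)) (mul (S_inv x) ?P)"
    by (simp only: mul_S_part_one_plus_nil_factor[OF x nz])
  also have "\<dots> = mul (mul (S_part x) (S_inv x)) (mul (one + ?W) ?P)"
    by (simp only: mul_ac)
  also have "\<dots> = one"
    using one_in_elems
    by (simp only: mul_S_part_S_inv[OF nz] mul_one_plus_neumann_nilpotent[OF in_N_nil_factor] mul_one_left)
  finally show "mul x (mul (S_inv x) ?P) = one" .
qed

lemma ainv_in_elems: "x \<in> elems \<Longrightarrow> \<forall>k\<in>{1..m}. x k \<noteq> 0 \<Longrightarrow> ainv m n Ups u x \<in> elems"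
  by (simp add: ainv_eq_neumann mul_in_elems)

lemma mul_ainv_log_derivative:
  assumes x: "x \<in> elems" and x': "x' \<in> elems" and nz: "\<forall>k\<in>{1..m}. x k \<noteq> 0"
  shows "mul (ainv m n Ups u x) x' = mul (S_inv x) (S_part x') +
    (\<Sum>j<Suc (n - m). cscale ((-1) ^ j) (mul (mpow (nil_factor x) j) (nil_factor_deriv x x')))"
proof -
  define D Di D' \<nu> \<nu>' W W' P where "D = S_part x" and "Di = S_inv x" and "D' = S_part x'"
    and "\<nu> = N_part x" and "\<nu>' = N_part x'" and "W = nil_factor x" and "W' = nil_factor_deriv x x'"
    and "P = neumann (nil_factor x) (Suc (n - m))"
  have DDi: "mul D Di = one" unfolding D_def Di_def using nz by (rule mul_S_part_S_inv)
  have parts_elems: "D \<in> elems" "D' \<in> elems" "\<nu> \<in> elems" "\<nu>' \<in> elems"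
    unfolding D_def D'_def \<nu>_def \<nu>'_def by (auto intro: in_S_elems in_N_elems in_S_S_part in_N_N_part)
  have "mul D W' = - mul (mul (mul D Di) Di) (mul D' \<nu>) + mul (mul D Di) \<nu>'"
    unfolding W'_def nil_factor_deriv_def D_def Di_def D'_def \<nu>_def \<nu>'_def
    by (simp add: mul_add_right mul_minus_left mul_minus_right mul_diff_right mul_diff_left mul_ac)
  also have "\<dots> = - mul D' W + \<nu>'"
    using DDi parts_elems by (simp add: mul_one_left mul_one_right mul_in_elems W_def nil_factor_def Di_def \<nu>_def mul_ac)
  finally have \<nu>': "\<nu>' = mul D W' + mul D' W" by simp
  have "x' = D' + \<nu>'"
    unfolding D'_def \<nu>'_def using x' by (rule S_part_plus_N_part[symmetric])
  also have "\<dots> = mul D' (one + W) + mul D W'"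
    using parts_elems by (simp add: \<nu>' mul_add_right mul_one_right add_ac)
  finally have x'_eq: "x' = mul D' (one + W) + mul D W'" .
  have "mul (ainv m n Ups u x) x' = mul (mul Di P) x'"
    unfolding Di_def P_def using x nz by (rule arg_cong[OF ainv_eq_neumann])
  also have "\<dots> = mul (mul Di D') (mul (one + W) P) + mul (mul D Di) (mul P W')"
    unfolding x'_eq by (simp add: mul_add_right mul_ac)
  also have "\<dots> = mul Di D' + mul P W'"
    using DDi mul_one_plus_neumann_nilpotent[OF in_N_nil_factor]
    by (simp add: W_def P_def mul_one_right mul_one_left mul_in_elems)
  also have "mul P W' = (\<Sum>j<Suc (n - m). cscale ((-1) ^ j) (mul (mpow W j) W'))"
    unfolding P_def W_def by (simp only: neumann_def mul_sum_left mul_cscale_left)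
  finally show ?thesis unfolding Di_def D'_def W_def W'_def .
qed

lemma has_coeff_derivative_mul:
  assumes X: "has_coeff_derivative X X' t" and Y: "has_coeff_derivative Y Y' t"
  shows "has_coeff_derivative (\<lambda>s. mul (X s) (Y s)) (mul X' (Y t) + mul (X t) Y') t"
  unfolding has_coeff_derivative_def
proof
  fix k
  let ?I = "{1..n}"
  show "((\<lambda>s. mul (X s) (Y s) k) has_vector_derivative (mul X' (Y t) + mul (X t) Y') k) (at t)"
  proof (cases "k \<in> ?I")
    case False
    then show ?thesis by (simp add: mul_outside)
  next
    case k: True
    have "((\<lambda>s. \<Sum>r\<in>?I. \<Sum>q\<in>?I. X s r * Y s q * T r q k) has_vector_derivative
          (\<Sum>r\<in>?I. \<Sum>q\<in>?I. (X t r * Y' q + X' r * Y t q) * T r q k)) (at t)"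
      using X Y unfolding has_coeff_derivative_def
      by (intro has_vector_derivative_sum has_vector_derivative_mult_left has_vector_derivative_mult) auto
    moreover have "(\<Sum>r\<in>?I. \<Sum>q\<in>?I. (X t r * Y' q + X' r * Y t q) * T r q k)
        = (mul X' (Y t) + mul (X t) Y') k"
      using k by (simp add: mul_apply algebra_simps sum.distrib)
    ultimately show ?thesis
      using k by (simp add: mul_apply)
  qed
qed

lemma has_coeff_derivative_mpow:
  assumes X: "has_coeff_derivative X X' t" and X': "X' \<in> elems"
  shows "has_coeff_derivative (\<lambda>s. mpow (X s) (Suc j)) (cscale (of_nat (Suc j)) (mul (mpow (X t) j) X')) t"
proof (induction j)
  case 0
  have "has_coeff_derivative (\<lambda>s. mul (X s) one) (mul X' one + mul (X t) 0) t"
    by (rule has_coeff_derivative_mul[OF X]) (simp add: has_coeff_derivative_def)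
  then show ?case
    using X' by (simp add: mul_one_right mul_zero_right mul_one_left cscale_def)
next
  case (Suc j)
  have "mul (X t) (mul (mpow (X t) j) X') = mul (mpow (X t) (Suc j)) X'"
    by (simp add: mul_ac)
  then have "mul X' (mpow (X t) (Suc j)) + mul (X t) (cscale (of_nat (Suc j)) (mul (mpow (X t) j) X'))
      = cscale (of_nat (Suc (Suc j))) (mul (mpow (X t) (Suc j)) X')"
    by (simp only: mul_cscale_right) (simp add: cscale_def mul_commute[of X'] fun_eq_iff algebra_simps)
  then show ?case
    using has_coeff_derivative_mul[OF X Suc.IH] by simp
qed

lemma coeff_continuous_mul:
  assumes X: "coeff_continuous X t" and Y: "coeff_continuous Y t"
  shows "coeff_continuous (\<lambda>s. mul (X s) (Y s)) t"
  unfolding coeff_continuous_def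
proof
  fix k
  have "isCont (\<lambda>s. \<Sum>r\<in>{1..n}. \<Sum>q\<in>{1..n}. X s r * Y s q * T r q k) t"
    using X Y unfolding coeff_continuous_def by (intro continuous_intros) auto
  then show "isCont (\<lambda>s. mul (X s) (Y s) k) t"
    by (cases "k \<in> {1..n}") (auto simp: mul_apply)
qed

lemma coeff_continuous_mpow: "coeff_continuous X t \<Longrightarrow> coeff_continuous (\<lambda>s. mpow (X s) j) t"
  by (induction j) (simp_all add: coeff_continuous_const coeff_continuous_mul)

lemma has_coeff_derivative_S_inv:
  assumes Z: "has_coeff_derivative Z Z' t" and nz: "\<forall>k\<in>{1..m}. Z t k \<noteq> 0"
  shows "has_coeff_derivative (\<lambda>s. S_inv (Z s)) (- mul (mul (S_inv (Z t)) (S_inv (Z t))) (S_part Z')) t"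
  unfolding has_coeff_derivative_def
proof
  fix k
  have "- mul (mul (S_inv (Z t)) (S_inv (Z t))) (S_part Z') k
      = (if k \<in> {1..m} then - (Z' k * (inverse (Z t k) * inverse (Z t k))) else 0)"
    by (simp add: mul_S_S in_S_S_inv in_S_S_part in_S_def S_inv_def S_part_def mult_ac)
  moreover have "((\<lambda>s. inverse (Z s k)) has_vector_derivative - (Z' k * (inverse (Z t k) * inverse (Z t k)))) (at t)"
    if "k \<in> {1..m}"
    using field_vector_diff_chain_at[OF Z[unfolded has_coeff_derivative_def, rule_format, of k]
        DERIV_inverse[OF nz[rule_format, OF that]]]
    by (simp add: o_def)
  ultimately show "((\<lambda>s. S_inv (Z s) k) has_vector_derivative
      (- mul (mul (S_inv (Z t)) (S_inv (Z t))) (S_part Z')) k) (at t)"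
    by (cases "k \<in> {1..m}") (auto simp: S_inv_def)
qed

lemma has_coeff_derivative_N_part:
  "has_coeff_derivative Z Z' t \<Longrightarrow> has_coeff_derivative (\<lambda>s. N_part (Z s)) (N_part Z') t"
  by (auto simp: has_coeff_derivative_def N_part_def)

lemma has_coeff_derivative_nil_factor:
  assumes Z: "has_coeff_derivative Z Z' t" and nz: "\<forall>k\<in>{1..m}. Z t k \<noteq> 0"
  shows "has_coeff_derivative (\<lambda>s. nil_factor (Z s)) (nil_factor_deriv (Z t) Z') t"
  unfolding nil_factor_def nil_factor_deriv_def
  by (rule has_coeff_derivative_mul[OF has_coeff_derivative_S_inv[OF Z nz] has_coeff_derivative_N_part[OF Z]])

lemma has_integral_mul_mpow_derivative_closed:
  assumes W: "\<And>t. t \<in> {0..1} \<Longrightarrow> has_coeff_derivative W (W' t) t"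
    and W': "\<And>t. W' t \<in> elems" and closed: "W 1 = W 0"
  shows "((\<lambda>t. mul (mpow (W t) j) (W' t) k) has_integral 0) {0..1}"
proof -
  have "((\<lambda>t. cscale (of_nat (Suc j)) (mul (mpow (W t) j) (W' t)) k) has_integral
      mpow (W 1) (Suc j) k - mpow (W 0) (Suc j) k) {0..1}"
  proof (rule fundamental_theorem_of_calculus)
    fix t :: real assume t: "t \<in> {0..1}"
    show "((\<lambda>s. mpow (W s) (Suc j) k) has_vector_derivative
        cscale (of_nat (Suc j)) (mul (mpow (W t) j) (W' t)) k) (at t within {0..1})"
      using has_coeff_derivative_mpow[OF W[OF t] W'] unfolding has_coeff_derivative_def
      by (blast intro: has_vector_derivative_at_within)
  qed simp
  then have "((\<lambda>t. of_nat (Suc j) * mul (mpow (W t) j) (W' t) k) has_integral 0) {0..1}"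
    by (simp add: closed cscale_def)
  from has_integral_mult_right[OF this, of "inverse (of_nat (Suc j))"]
  have "((\<lambda>t. (inverse (of_nat (Suc j)) * of_nat (Suc j)) * mul (mpow (W t) j) (W' t) k) has_integral 0) {0..1}"
    by (simp only: mult.assoc mult_zero_right)
  moreover have "inverse (of_nat (Suc j)) * of_nat (Suc j) = (1 :: complex)"
    by (rule left_inverse) (simp only: of_nat_eq_0_iff nat.simps(3) not_False_eq_True)
  ultimately show ?thesis by simp
qed

lemma add_in_elems: "x \<in> elems \<Longrightarrow> y \<in> elems \<Longrightarrow> x + y \<in> elems"
  by (simp add: elems_iff)

lemma nil_factor_deriv_in_elems: "nil_factor_deriv x x' \<in> elems"
  unfolding nil_factor_deriv_def by (intro add_in_elems mul_in_elems)

lemma has_integral_S_log_derivative: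
  assumes Z: "\<And>t. has_coeff_derivative Z (Z' t) t"
    and Z'_cont: "\<And>k. continuous_on {0..1} (\<lambda>t. Z' t k)"
    and nz: "\<And>t. t \<in> {0..1} \<Longrightarrow> \<forall>k\<in>{1..m}. Z t k \<noteq> 0"
    and winding: "\<And>k. k \<in> {1..m} \<Longrightarrow> winding_number (\<lambda>t. Z t k) 0 = 1"
  shows "((\<lambda>t. mul (S_inv (Z t)) (S_part (Z' t)) k) has_integral 2 * of_real pi * \<i> * one k) {0..1}"
proof (cases "k \<in> {1..m}")
  case k: True
  have "((\<lambda>t. Z' t k / Z t k) has_integral 2 * of_real pi * \<i> * winding_number (\<lambda>t. Z t k) 0) {0..1}"
    using Z Z'_cont nz k
    by (intro has_integral_winding_number_log_derivative) (auto simp: has_coeff_derivative_def)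
  then show ?thesis
    unfolding mul_S_S[OF in_S_S_inv in_S_S_part] using k winding[OF k]
    by (simp add: S_inv_def S_part_def aone_def divide_inverse mult.commute)
next
  case False
  then have "mul (S_inv (Z t)) (S_part (Z' t)) k = 0" and "one k = 0" for t
    unfolding mul_S_S[OF in_S_S_inv in_S_S_part] by (auto simp: S_inv_def aone_def)
  then show ?thesis by simp
qed

lemma has_integral_nil_factor_terms_closed_curve:
  assumes Z: "\<And>t. has_coeff_derivative Z (Z' t) t" and closed: "Z 1 = Z 0"
    and nz: "\<And>t. t \<in> {0..1} \<Longrightarrow> \<forall>k\<in>{1..m}. Z t k \<noteq> 0"
  shows "((\<lambda>t. (\<Sum>j<N. cscale ((-1) ^ j)
      (mul (mpow (nil_factor (Z t)) j) (nil_factor_deriv (Z t) (Z' t)))) k) has_integral 0) {0..1}"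
proof -
  have "((\<lambda>t. mul (mpow (nil_factor (Z t)) j) (nil_factor_deriv (Z t) (Z' t)) k) has_integral 0) {0..1}"
    for j
    using closed
    by (intro has_integral_mul_mpow_derivative_closed has_coeff_derivative_nil_factor[OF Z nz]
        nil_factor_deriv_in_elems) simp_all
  from has_integral_mult_right[OF this, of "(-1) ^ j" for j]
  have "((\<lambda>t. \<Sum>j<N. (-1) ^ j * mul (mpow (nil_factor (Z t)) j) (nil_factor_deriv (Z t) (Z' t)) k)
      has_integral (\<Sum>j<N. 0)) {0..1}"
    by (intro has_integral_sum) simp_all
  then show ?thesis
    by (simp add: sum_fun_apply cscale_def)
qed

lemma has_integral_ainv_mul_derivative_closed_curve:
  assumes Z_elems: "\<And>t. Z t \<in> elems" and Z'_elems: "\<And>t. Z' t \<in> elems"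
    and Z: "\<And>t. has_coeff_derivative Z (Z' t) t"
    and Z'_cont: "\<And>k. continuous_on {0..1} (\<lambda>t. Z' t k)"
    and closed: "Z 1 = Z 0"
    and nz: "\<And>t. t \<in> {0..1} \<Longrightarrow> \<forall>k\<in>{1..m}. Z t k \<noteq> 0"
    and winding: "\<And>k. k \<in> {1..m} \<Longrightarrow> winding_number (\<lambda>t. Z t k) 0 = 1"
  shows "((\<lambda>t. mul (ainv m n Ups u (Z t)) (Z' t) k) has_integral 2 * of_real pi * \<i> * one k) {0..1}"
proof -
  have "mul (S_inv (Z t)) (S_part (Z' t)) k + (\<Sum>j<Suc (n - m).
      cscale ((-1) ^ j) (mul (mpow (nil_factor (Z t)) j) (nil_factor_deriv (Z t) (Z' t)))) k
      = mul (ainv m n Ups u (Z t)) (Z' t) k"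
    if "t \<in> {0..1}" for t
    using mul_ainv_log_derivative[OF Z_elems Z'_elems nz[OF that]] by simp
  moreover have "((\<lambda>t. mul (S_inv (Z t)) (S_part (Z' t)) k + (\<Sum>j<Suc (n - m).
      cscale ((-1) ^ j) (mul (mpow (nil_factor (Z t)) j) (nil_factor_deriv (Z t) (Z' t)))) k)
      has_integral 2 * of_real pi * \<i> * one k) {0..1}"
    using has_integral_add[OF has_integral_S_log_derivative[OF Z Z'_cont nz winding]
        has_integral_nil_factor_terms_closed_curve[OF Z closed nz]]
    by (simp only: add_0_right)
  ultimately show ?thesis
    by (rule has_integral_eq)
qed

lemma continuous_on_ainv_curve:
  assumes Z_elems: "\<And>t. Z t \<in> elems" and Z: "\<And>t. has_coeff_derivative Z (Z' t) t"
    and nz: "\<And>t. t \<in> {0..1} \<Longrightarrow> \<forall>k\<in>{1..m}. Z t k \<noteq> 0"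
  shows "continuous_on {0..1} (\<lambda>t. ainv m n Ups u (Z t) k)"
proof -
  have "coeff_continuous (\<lambda>s. mul (S_inv (Z s)) (neumann (nil_factor (Z s)) (Suc (n - m)))) t"
    if "t \<in> {0..1}" for t
    using has_coeff_derivative_imp_coeff_continuous[OF has_coeff_derivative_S_inv[OF Z nz[OF that]]]
      has_coeff_derivative_imp_coeff_continuous[OF has_coeff_derivative_nil_factor[OF Z nz[OF that]]]
    unfolding neumann_def
    by (intro coeff_continuous_mul coeff_continuous_sum coeff_continuous_cscale coeff_continuous_mpow)
  then have "continuous_on {0..1} (\<lambda>t. mul (S_inv (Z t)) (neumann (nil_factor (Z t)) (Suc (n - m))) k)"
    by (intro continuous_at_imp_continuous_on) (auto simp: coeff_continuous_def)
  then show ?thesis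
    by (rule continuous_on_eq) (simp add: ainv_eq_neumann Z_elems nz)
qed

lemma has_integral_mul_left:
  assumes "\<And>r. r \<in> {1..n} \<Longrightarrow> ((\<lambda>t. f t r) has_integral F r) S"
  shows "((\<lambda>t. mul y (f t) k) has_integral mul y F k) S"
proof (cases "k \<in> {1..n}")
  case True
  have "((\<lambda>t. \<Sum>r\<in>{1..n}. \<Sum>s\<in>{1..n}. y r * f t s * T r s k) has_integral
      (\<Sum>r\<in>{1..n}. \<Sum>s\<in>{1..n}. y r * F s * T r s k)) S"
    using assms by (intro has_integral_sum has_integral_mult_left has_integral_mult_right) auto
  then show ?thesis
    using True by (simp add: mul_apply)
qed (simp add: mul_outside)

lemma mul_zeta_apply:
  assumes "x \<in> elems"
  shows "mul x (zeta m A B P) k = (if k \<in> {1..n} then x k * of_real (P $ 1) else 0)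
    + mul A (\<lambda>r. x r * of_real (P $ 2)) k + mul B (\<lambda>r. x r * of_real (P $ 3)) k"
proof -
  have x_scaled: "(\<lambda>r. x r * c) = cscale c x" for c
    by (simp add: cscale_def fun_eq_iff mult.commute)
  have "mul x (zeta m A B P) = cscale (of_real (P $ 1)) x + mul A (cscale (of_real (P $ 2)) x)
      + mul B (cscale (of_real (P $ 3)) x)"
    unfolding zeta_eq_cscale
    by (simp only: mul_add_right mul_cscale_right mul_commute[of x] mul_one_left[OF assms])
  then show ?thesis
    using assms by (auto simp: x_scaled cscale_def elems_iff)
qed

lemma alg_int_eq_integral:
  assumes A: "A \<in> elems" and B: "B \<in> elems"
    and \<Psi>: "\<And>t. t \<in> {0..1} \<Longrightarrow> \<Psi> (\<gamma> t) \<in> elems"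
    and \<Psi>_cont: "\<And>k. continuous_on {0..1} (\<lambda>t. \<Psi> (\<gamma> t) k)"
    and \<gamma>'_cont: "\<And>j. continuous_on {0..1} (\<lambda>t. vector_derivative \<gamma> (at t) $ j)"
  shows "alg_int m n Ups u A B \<gamma> \<Psi> k
    = integral {0..1} (\<lambda>t. mul (\<Psi> (\<gamma> t)) (zeta m A B (vector_derivative \<gamma> (at t))) k)"
proof -
  define c where "c j t = complex_of_real (vector_derivative \<gamma> (at t) $ j)" for j t
  define V where "V j k = (if k \<in> {1..n} then integral {0..1} (\<lambda>t. \<Psi> (\<gamma> t) k * c j t) else 0)" for j k
  have alg_int: "alg_int m n Ups u A B \<gamma> \<Psi> k = V 1 k + mul A (V 2) k + mul B (V 3) k"
    unfolding alg_int_def Let_def coord_int_def V_def c_def ..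
  have V: "((\<lambda>t. \<Psi> (\<gamma> t) r * c j t) has_integral V j r) {0..1}" if "r \<in> {1..n}" for j r
    using that \<Psi>_cont \<gamma>'_cont unfolding V_def c_def
    by (simp add: integrable_integral integrable_continuous_interval continuous_on_mult continuous_on_of_real)
  have V1: "((\<lambda>t. if k \<in> {1..n} then \<Psi> (\<gamma> t) k * c 1 t else 0) has_integral V 1 k) {0..1}"
    using V by (cases "k \<in> {1..n}") (auto simp: V_def)
  have pointwise: "mul (\<Psi> (\<gamma> t)) (zeta m A B (vector_derivative \<gamma> (at t))) k
      = (if k \<in> {1..n} then \<Psi> (\<gamma> t) k * c 1 t else 0)
        + mul A (\<lambda>r. \<Psi> (\<gamma> t) r * c 2 t) k + mul B (\<lambda>r. \<Psi> (\<gamma> t) r * c 3 t) k"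
    if "t \<in> {0..1}" for t
    unfolding c_def by (rule mul_zeta_apply[OF \<Psi>[OF that]])
  have "((\<lambda>t. mul X (\<lambda>r. \<Psi> (\<gamma> t) r * c j t) k) has_integral mul X (V j) k) {0..1}" for X j
    using V by (rule has_integral_mul_left)
  then have "((\<lambda>t. (if k \<in> {1..n} then \<Psi> (\<gamma> t) k * c 1 t else 0)
      + mul A (\<lambda>r. \<Psi> (\<gamma> t) r * c 2 t) k + mul B (\<lambda>r. \<Psi> (\<gamma> t) r * c 3 t) k)
      has_integral V 1 k + mul A (V 2) k + mul B (V 3) k) {0..1}"
    by (intro has_integral_add V1)
  with pointwise[symmetric]
  have "((\<lambda>t. mul (\<Psi> (\<gamma> t)) (zeta m A B (vector_derivative \<gamma> (at t))) k) has_integral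
      V 1 k + mul A (V 2) k + mul B (V 3) k) {0..1}"
    by (rule has_integral_eq)
  then show ?thesis
    unfolding alg_int by (rule integral_unique[symmetric])
qed

lemma alg_int_ainv_zeta_closed_curve:
  assumes AB: "A \<in> elems" "B \<in> elems"
    and \<gamma>: "\<And>t. (\<gamma> has_vector_derivative \<gamma>' t) (at t)"
    and \<gamma>'_cont: "continuous_on {0..1} \<gamma>'"
    and closed: "\<gamma> 1 = \<gamma> 0"
    and nz: "\<And>t. t \<in> {0..1} \<Longrightarrow> \<forall>k\<in>{1..m}. zeta m A B (\<gamma> t) k \<noteq> 0"
    and winding: "\<And>k. k \<in> {1..m} \<Longrightarrow> winding_number (\<lambda>t. zeta m A B (\<gamma> t) k) 0 = 1"
  shows "alg_int m n Ups u A B \<gamma> (\<lambda>P. ainv m n Ups u (zeta m A B P)) = (\<lambda>k. 2 * of_real pi * \<i> * one k)"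
proof
  fix k
  define Z Z' where "Z t = zeta m A B (\<gamma> t)" and "Z' t = zeta m A B (\<gamma>' t)" for t
  have Z_elems: "Z t \<in> elems" and Z'_elems: "Z' t \<in> elems" for t
    using one_in_elems AB by (auto simp: Z_def Z'_def zeta_def elems_iff)
  have Z: "has_coeff_derivative Z (Z' t) t" for t
    unfolding Z_def[abs_def] Z'_def by (rule has_coeff_derivative_zeta[OF \<gamma>])
  have Z_nz: "\<forall>k\<in>{1..m}. Z t k \<noteq> 0" if "t \<in> {0..1}" for t
    using nz[OF that] by (simp add: Z_def)
  have \<gamma>': "vector_derivative \<gamma> (at t) = \<gamma>' t" for t
    by (rule vector_derivative_at[OF \<gamma>])
  have "alg_int m n Ups u A B \<gamma> (\<lambda>P. ainv m n Ups u (zeta m A B P)) k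
      = integral {0..1} (\<lambda>t. mul (ainv m n Ups u (Z t)) (Z' t) k)"
    using ainv_in_elems[OF Z_elems Z_nz] continuous_on_ainv_curve[OF Z_elems Z Z_nz] \<gamma>'_cont
    by (subst alg_int_eq_integral[OF AB]) (auto simp: Z_def Z'_def \<gamma>' intro: continuous_intros)
  also have "\<dots> = 2 * of_real pi * \<i> * one k"
    using \<gamma>'_cont closed winding
    by (intro integral_unique has_integral_ainv_mul_derivative_closed_curve Z_elems Z'_elems Z Z_nz)
      (auto simp: Z_def Z'_def zeta_def intro!: continuous_intros)
  finally show "alg_int m n Ups u A B \<gamma> (\<lambda>P. ainv m n Ups u (zeta m A B P)) k = 2 * of_real pi * \<i> * one k" .
qed

end

lemma simple_path_antipodal_nonzero:
  fixes g :: "real \<Rightarrow> 'a :: real_normed_vector"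
  assumes simple: "simple_path g" and antipodal: "\<And>t. g (t + 1/2) = - g t" and t: "t \<in> {0..1}"
  shows "g t \<noteq> 0"
proof
  assume g0: "g t = 0"
  define t' where "t' = (if t \<le> 1/2 then t + 1/2 else t - 1/2)"
  have t': "t' \<in> {0..1}" using t unfolding t'_def by auto
  have "g t' = 0"
    using g0 antipodal[of t] antipodal[of "t - 1/2"] unfolding t'_def by (auto split: if_splits)
  then have "t = t' \<or> t = 0 \<and> t' = 1 \<or> t = 1 \<and> t' = 0"
    using simple t t' g0 unfolding simple_path_def loop_free_def by metis
  then show False unfolding t'_def by (auto split: if_splits)
qed

lemma circ_has_vector_derivative:
  "(circ R p q has_vector_derivative (2 * pi) *\<^sub>R circ R q (- p) t) (at t)"
  unfolding circ_def[abs_def]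
  by (rule derivative_eq_intros refl | simp)+ (simp add: algebra_simps scaleR_diff_right)

lemma circ_add_half: "circ R p q (t + 1/2) = - circ R p q t"
proof -
  have "2 * pi * (t + 1/2) = 2 * pi * t + pi" by (simp add: algebra_simps)
  then show ?thesis by (simp add: circ_def algebra_simps)
qed

lemma circ_1: "circ R p q 1 = circ R p q 0"
  by (simp add: circ_def)

lemma continuous_on_circ: "continuous_on S (circ R p q)"
  unfolding circ_def[abs_def] by (intro continuous_intros)

lemma zeta_uminus: "zeta m A B (- P) = - zeta m A B P"
  by (simp add: zeta_def fun_eq_iff algebra_simps)

theorem theorem8:
  fixes m n :: nat and Ups :: "nat \<Rightarrow> nat \<Rightarrow> nat \<Rightarrow> complex" and u :: "nat \<Rightarrow> nat"
    and a b :: "nat \<Rightarrow> complex" and R :: real and p q :: "real^3"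
  assumes alg: "is_algebra_Anm m n Ups u"
    and dimN: "n - m = 4"
    and h1: "Ups (m+1) (m+1) (m+2) * Ups (m+2) (m+2) (m+3) = 0"
    and h2: "Ups (m+1) (m+1) (m+2) * Ups (m+2) (m+2) (m+4) = 0"
    and h3: "Ups (m+1) (m+1) (m+3) * Ups (m+2) (m+3) (m+4) = 0"
    and h4: "Ups (m+3) (m+3) (m+4) * Ups (m+1) (m+1) (m+3) = 0"
    and h5: "Ups (m+1) (m+2) (m+3) * Ups (m+1) (m+3) (m+4) = 0"
    and h6: "Ups (m+1) (m+2) (m+3) * Ups (m+2) (m+3) (m+4) = 0"
    and h7: "Ups (m+1) (m+2) (m+3) * Ups (m+3) (m+3) (m+4) = 0"
    and h8: "Ups (m+1) (m+1) (m+2) * Ups (m+1) (m+2) (m+3) * Ups (m+2) (m+3) (m+4) = 0"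
    and h9: "Ups (m+1) (m+1) (m+2) * Ups (m+1) (m+2) (m+3) * Ups (m+3) (m+3) (m+4) = 0"
    and h10: "Ups (m+2) (m+2) (m+3) * Ups (m+1) (m+3) (m+4) = 0"
    and h11: "Ups (m+2) (m+2) (m+3) * Ups (m+3) (m+3) (m+4) = 0"
    and h12: "Ups (m+2) (m+2) (m+3) * Ups (m+1) (m+1) (m+2) * Ups (m+1) (m+3) (m+4) = 0"
    and h13: "Ups (m+2) (m+2) (m+3) * Ups (m+1) (m+1) (m+2) * Ups (m+2) (m+3) (m+4) = 0"
    and h14: "Ups (m+2) (m+2) (m+3) * Ups (m+1) (m+1) (m+2) * Ups (m+3) (m+3) (m+4) = 0"
    and indep: "\<forall>\<alpha> \<beta> \<gamma> :: real.
        (\<forall>k. of_real \<alpha> * aone m k + of_real \<beta> * coeffs_el n a k + of_real \<gamma> * coeffs_el n b k = 0)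
        \<longrightarrow> \<alpha> = 0 \<and> \<beta> = 0 \<and> \<gamma> = 0"
    and surj_fu: "\<forall>v\<in>{1..m}. \<forall>w::complex. \<exists>x y z :: real.
        of_real x + of_real y * a v + of_real z * b v = w"
    and R_pos: "R > 0"
    and pq: "norm p = 1" "norm q = 1" "inner p q = 0"
    and jordan: "\<forall>v\<in>{1..m}.
        simple_path (\<lambda>t. zeta m (coeffs_el n a) (coeffs_el n b) (circ R p q t) v) \<and>
        winding_number (\<lambda>t. zeta m (coeffs_el n a) (coeffs_el n b) (circ R p q t) v) 0 = 1"
  shows "alg_int m n Ups u (coeffs_el n a) (coeffs_el n b) (circ R p q)
           (\<lambda>P. ainv m n Ups u (zeta m (coeffs_el n a) (coeffs_el n b) P))
         = (\<lambda>k. 2 * of_real pi * \<i> * aone m k)"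
proof -
  interpret Anm_algebra m n Ups u by unfold_locales (rule alg)
  define A B where "A = coeffs_el n a" and "B = coeffs_el n b"
  have nz: "\<forall>k\<in>{1..m}. zeta m A B (circ R p q t) k \<noteq> 0" if "t \<in> {0..1}" for t
  proof
    fix k assume "k \<in> {1..m}"
    then have "simple_path (\<lambda>t. zeta m A B (circ R p q t) k)"
      using jordan by (simp add: A_def B_def)
    then show "zeta m A B (circ R p q t) k \<noteq> 0"
      using simple_path_antipodal_nonzero[of "\<lambda>t. zeta m A B (circ R p q t) k"] that
      by (simp add: circ_add_half zeta_uminus)
  qed
  have "alg_int m n Ups u A B (circ R p q) (\<lambda>P. ainv m n Ups u (zeta m A B P)) = (\<lambda>k. 2 * of_real pi * \<i> * one k)"
    using jordan continuous_on_circ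
    by (intro alg_int_ainv_zeta_closed_curve[OF _ _ circ_has_vector_derivative _ circ_1 nz])
      (auto simp: A_def B_def coeffs_el_def elems_iff intro!: continuous_intros)
  then show ?thesis by (simp add: A_def B_def)
qed

end
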